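(* If $q=p^n$ is odd, then $E_{(q-3)/2}(x)+E_{(q-1)/2}(x)\equiv(x-2)^{(q-1)/2}\pmod p$ as polynomials in $\mathbb Z[x]$.
   Context: $E_k\in\mathbb Z[x]$ (Dickson polynomials of the second kind) are defined by $E_0=1$, $E_1=x$, $E_{k+2}=xE_{k+1}-E_k$. *)

theory Defs
  imports "HOL-Computational_Algebra.Polynomial" "HOL-Computational_Algebra.Primes"
    "HOL-Number_Theory.Cong"
begin

fun dicksonE :: "nat \<Rightarrow> int poly" where
  "dicksonE 0 = 1"
| "dicksonE (Suc 0) = [:0, 1:]"
| "dicksonE (Suc (Suc k)) = [:0, 1:] * dicksonE (Suc k) - dicksonE k"

end

theory Submission
  imports Defs "HOL-Computational_Algebra.Formal_Laurent_Series"
begin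

text \<open>
  Substitute x = t + 1/t, working with Laurent series over the coefficient ring.
  Then t^k (t^2 - 1) E_k = t^(2k+2) - 1, so for q = 2m + 1 one gets
  t^m (t - 1) (E_(m-1) + E_m) = t^q - 1, whereas t^m (t - 1) (x - 2)^m = (t - 1)^q.
  Since q is a power of p, the Frobenius congruence makes the two right-hand sides agree
  modulo p. Divisibility of all coefficients by p survives cancelling t^m (t - 1), and the
  substitution reflects it back to polynomials because the top coefficient of f(t + 1/t)
  is the leading coefficient of f.
\<close>

definition fls_X_plus_X_inv :: "'a::comm_ring_1 fls" where
  "fls_X_plus_X_inv = fls_X + fls_X_inv"

definition poly_X_plus_X_inv :: "'a::comm_ring_1 poly \<Rightarrow> 'a fls" where
  "poly_X_plus_X_inv f = poly (map_poly fls_const f) fls_X_plus_X_inv"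

lemma poly_X_plus_X_inv_0 [simp]: "poly_X_plus_X_inv 0 = 0"
  by (simp add: poly_X_plus_X_inv_def)

lemma poly_X_plus_X_inv_pCons [simp]:
  "poly_X_plus_X_inv (pCons a f) = fls_const a + fls_X_plus_X_inv * poly_X_plus_X_inv f"
  by (simp add: poly_X_plus_X_inv_def map_poly_pCons)

lemma poly_X_plus_X_inv_1 [simp]: "poly_X_plus_X_inv 1 = 1"
  by (simp add: one_pCons)

lemma poly_X_plus_X_inv_add [simp]:
  "poly_X_plus_X_inv (f + g) = poly_X_plus_X_inv f + poly_X_plus_X_inv g"
  by (induction f g rule: poly_induct2) (simp_all add: fls_plus_const algebra_simps)

lemma poly_X_plus_X_inv_smult [simp]:
  "poly_X_plus_X_inv (smult a f) = fls_const a * poly_X_plus_X_inv f"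
  by (induction f) (simp_all add: algebra_simps)

lemma poly_X_plus_X_inv_mult [simp]:
  "poly_X_plus_X_inv (f * g) = poly_X_plus_X_inv f * poly_X_plus_X_inv g"
  by (induction f) (simp_all add: algebra_simps)

lemma poly_X_plus_X_inv_diff [simp]:
  "poly_X_plus_X_inv (f - g) = poly_X_plus_X_inv f - poly_X_plus_X_inv g"
  using poly_X_plus_X_inv_add[of "f - g" g] by (simp add: algebra_simps)

lemma poly_X_plus_X_inv_power [simp]:
  "poly_X_plus_X_inv (f ^ k) = poly_X_plus_X_inv f ^ k"
  by (induction k) (simp_all add: one_pCons)

lemma fls_X_mult_X_plus_X_inv: "fls_X * fls_X_plus_X_inv = (fls_X ^ 2 + 1 :: 'a::comm_ring_1 fls)"
  by (simp add: fls_X_plus_X_inv_def distrib_left fls_X_times_conv_shift power2_eq_square)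

lemma fls_X_plus_X_inv_mult_nth:
  "fls_nth (fls_X_plus_X_inv * F) j = fls_nth F (j - 1) + fls_nth F (j + 1)"
  by (simp add: fls_X_plus_X_inv_def distrib_right fls_X_times_conv_shift fls_X_inv_times_conv_shift)

lemma dicksonE_poly_X_plus_X_inv:
  "fls_X ^ k * (fls_X ^ 2 - 1) * poly_X_plus_X_inv (dicksonE k) = fls_X ^ (2 * k + 2) - 1"
proof (induction k rule: dicksonE.induct)
  case 1
  then show ?case by (simp add: power2_eq_square)
next
  case 2
  have "fls_X ^ 1 * (fls_X ^ 2 - 1) * poly_X_plus_X_inv (dicksonE 1)
      = (fls_X ^ 2 - 1) * (fls_X * fls_X_plus_X_inv :: int fls)"
    by (simp add: mult_ac)
  also have "\<dots> = fls_X ^ (2 * 1 + 2) - 1"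
    unfolding fls_X_mult_X_plus_X_inv by (simp add: algebra_simps power2_eq_square power4_eq_xxxx)
  finally show ?case by simp
next
  case (3 k)
  let ?A = "\<lambda>k. fls_X ^ k * (fls_X ^ 2 - 1) * poly_X_plus_X_inv (dicksonE k) :: int fls"
  have "?A (Suc (Suc k)) = (fls_X * fls_X_plus_X_inv) * ?A (Suc k) - fls_X ^ 2 * ?A k"
    by (simp add: algebra_simps power2_eq_square)
  also have "\<dots> = fls_X ^ (2 * Suc (Suc k) + 2) - 1"
    unfolding 3 fls_X_mult_X_plus_X_inv by (simp add: algebra_simps power_add[symmetric])
  finally show ?case .
qed

lemma fls_X_plus_1_nonzero: "fls_X + 1 \<noteq> (0 :: 'a::comm_ring_1 fls)"
proof
  assume "fls_X + 1 = (0 :: 'a fls)"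
  then have "fls_nth (fls_X + 1 :: 'a fls) 0 = 0" by simp
  then show False by simp
qed

lemma dicksonE_sum_poly_X_plus_X_inv:
  "fls_X ^ Suc k * (fls_X - 1) * poly_X_plus_X_inv (dicksonE k + dicksonE (Suc k))
     = fls_X ^ (2 * k + 3) - 1"
proof -
  let ?A = "\<lambda>k. fls_X ^ k * (fls_X ^ 2 - 1) * poly_X_plus_X_inv (dicksonE k) :: int fls"
  have "(fls_X + 1) * (fls_X ^ Suc k * (fls_X - 1) * poly_X_plus_X_inv (dicksonE k + dicksonE (Suc k)))
      = fls_X * ?A k + ?A (Suc k)"
    by (simp add: algebra_simps power2_eq_square)
  also have "\<dots> = (fls_X + 1) * (fls_X ^ (2 * k + 3) - 1)"
    unfolding dicksonE_poly_X_plus_X_inv by (simp add: algebra_simps power_add power3_eq_cube)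
  finally show ?thesis
    using fls_X_plus_1_nonzero mult_left_cancel by blast
qed

lemma poly_X_plus_X_inv_X_minus_2_power:
  "fls_X ^ m * poly_X_plus_X_inv ([:-2, 1:] ^ m) = (fls_X - 1) ^ (2 * m)"
proof -
  have base: "fls_X * poly_X_plus_X_inv [:-2, 1:] = (fls_X - 1) ^ 2"
    using fls_X_mult_X_plus_X_inv
    by (simp add: algebra_simps power2_eq_square numeral_2_eq_2 fls_const_uminus)
  have "fls_X ^ m * poly_X_plus_X_inv ([:-2, 1:] ^ m) = (fls_X * poly_X_plus_X_inv [:-2, 1:]) ^ m"
    by (simp add: power_mult_distrib)
  also have "\<dots> = (fls_X - 1) ^ (2 * m)"
    unfolding base by (simp add: power_mult)
  finally show ?thesis .
qed

lemma dicksonE_sum_minus_X_minus_2_power: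
  "fls_X ^ Suc k * ((fls_X - 1)
      * poly_X_plus_X_inv (dicksonE k + dicksonE (Suc k) - [:-2, 1:] ^ Suc k))
    = - ((fls_X - 1) ^ (2 * k + 3) - (fls_X ^ (2 * k + 3) - 1))"
proof -
  have "fls_X ^ Suc k * ((fls_X - 1)
      * poly_X_plus_X_inv (dicksonE k + dicksonE (Suc k) - [:-2, 1:] ^ Suc k))
    = fls_X ^ Suc k * (fls_X - 1) * poly_X_plus_X_inv (dicksonE k + dicksonE (Suc k))
      - (fls_X - 1) * (fls_X ^ Suc k * poly_X_plus_X_inv ([:-2, 1:] ^ Suc k))"
    unfolding poly_X_plus_X_inv_diff by (simp only: right_diff_distrib mult_ac)
  also have "\<dots> = - ((fls_X - 1) ^ (2 * k + 3) - (fls_X ^ (2 * k + 3) - 1))"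
    unfolding dicksonE_sum_poly_X_plus_X_inv poly_X_plus_X_inv_X_minus_2_power
    by (simp add: numeral_3_eq_3 flip: power_Suc)
  finally show ?thesis .
qed

lemma poly_X_plus_X_inv_nth_degree:
  "fls_nth (poly_X_plus_X_inv f) (int (degree f)) = lead_coeff f \<and>
   (\<forall>j > int (degree f). fls_nth (poly_X_plus_X_inv f) j = 0)"
proof (induction f)
  case (pCons a f)
  show ?case
  proof (cases "f = 0")
    case False
    then show ?thesis
      using pCons.IH by (auto simp: fls_X_plus_X_inv_mult_nth)
  qed simp
qed simp

lemma dvd_coeff_if_dvd_poly_X_plus_X_inv:
  assumes "\<And>j. d dvd fls_nth (poly_X_plus_X_inv f) j"
  shows "d dvd coeff f i"
  using assms
proof (induction "degree f" arbitrary: f rule: less_induct)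
  case less
  show ?case
  proof (cases "f = 0")
    case False
    define n where "n = degree f"
    define g where "g = f - monom (lead_coeff f) n"
    have lead: "d dvd lead_coeff f"
      using less.prems[of "int n"] poly_X_plus_X_inv_nth_degree[of f] by (simp add: n_def)
    have coeff_f: "coeff f i = coeff g i + (if i = n then lead_coeff f else 0)" for i
      by (simp add: g_def coeff_monom)
    have "d dvd fls_nth (poly_X_plus_X_inv g) j" for j
      using less.prems[of j] lead
      by (simp add: g_def monom_altdef poly_X_plus_X_inv_def[symmetric])
    moreover have "degree g < degree f" if "g \<noteq> 0"
    proof -
      have "degree g \<le> n"
        unfolding g_def n_def by (rule degree_diff_le) (auto simp: degree_monom_le)
      moreover have "coeff g n = 0" using coeff_f[of n] by (simp add: n_def)
      ultimately show ?thesis using that n_def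
        by (metis le_neq_implies_less leading_coeff_0_iff)
    qed
    ultimately have "d dvd coeff g i"
      using less.hyps by (cases "g = 0") auto
    then show ?thesis
      using lead unfolding coeff_f[of i] by simp
  qed simp
qed

lemma dvd_fls_nth_cancel_X_power:
  fixes G :: "'a::comm_ring_1 fls"
  assumes "\<And>j. d dvd fls_nth (fls_X ^ k * G) j"
  shows "d dvd fls_nth G j"
  using assms[of "j + int k"] by (simp add: fls_X_power_times_conv_shift)

lemma dvd_fls_nth_cancel_X_minus_1:
  fixes G :: "'a::comm_ring_1 fls"
  assumes "\<And>j. d dvd fls_nth ((fls_X - 1) * G) j"
  shows "d dvd fls_nth G j"
proof -
  define k where "k = fls_subdegree G - 1"
  have "d dvd fls_nth G i" if "k \<le> i" for i
    using that
  proof (induction i rule: int_ge_induct)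
    case base
    then show ?case by (simp add: k_def)
  next
    case (step i)
    have "fls_nth G (i + 1) = fls_nth G i - fls_nth ((fls_X - 1) * G) (i + 1)"
      by (simp add: left_diff_distrib fls_X_times_conv_shift)
    then show ?case
      using step.IH assms by simp
  qed
  then show ?thesis
    by (cases "k \<le> j") (simp_all add: k_def)
qed

lemma prime_dvd_add_power_prime:
  fixes x y :: "'a::comm_ring_1"
  assumes "prime p"
  shows "of_nat p dvd (x + y) ^ p - (x ^ p + y ^ p)"
proof -
  have "p > 0" using assms prime_gt_0_nat by blast
  then have split: "{..p} = insert 0 (insert p {0<..<p})" by auto
  have "of_nat p dvd of_nat (p choose k) * x ^ k * y ^ (p - k)" if "k \<in> {0<..<p}" for k
  proof -
    have "p dvd p choose k"
      using that assms by (intro dvd_choose_prime) auto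
    then obtain c where "p choose k = p * c" ..
    then show ?thesis by simp
  qed
  then have "of_nat p dvd (\<Sum>k\<in>{0<..<p}. of_nat (p choose k) * x ^ k * y ^ (p - k))"
    by (rule dvd_sum)
  moreover have "(x + y) ^ p - (x ^ p + y ^ p)
      = (\<Sum>k\<in>{0<..<p}. of_nat (p choose k) * x ^ k * y ^ (p - k))"
    using \<open>p > 0\<close> by (simp add: binomial_ring split)
  ultimately show ?thesis by simp
qed

lemma prime_dvd_add_power_prime_power:
  fixes x y :: "'a::comm_ring_1"
  assumes "prime p"
  shows "of_nat p dvd (x + y) ^ (p ^ n) - (x ^ (p ^ n) + y ^ (p ^ n))"
proof (induction n)
  case (Suc n)
  have pow: "(z ^ p ^ n) ^ p = z ^ p ^ Suc n" for z :: 'a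
    by (metis power_mult power_Suc2)
  define u where "u = (x + y) ^ (p ^ n)"
  define v where "v = x ^ (p ^ n) + y ^ (p ^ n)"
  have "u - v dvd u ^ p - v ^ p"
    by (simp add: power_diff_sumr2)
  then have "of_nat p dvd u ^ p - v ^ p"
    using Suc.IH unfolding u_def v_def by (rule dvd_trans[rotated])
  moreover have "of_nat p dvd v ^ p - (x ^ p ^ Suc n + y ^ p ^ Suc n)"
    using prime_dvd_add_power_prime[OF assms, of "x ^ p ^ n" "y ^ p ^ n"]
    by (simp only: v_def pow)
  ultimately have "of_nat p dvd (u ^ p - v ^ p) + (v ^ p - (x ^ p ^ Suc n + y ^ p ^ Suc n))"
    by (rule dvd_add)
  then show ?case
    by (simp add: u_def pow algebra_simps)
qed simp

theorem corollary7p6: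
  fixes p n q :: nat
  assumes "prime p" and "n \<ge> 1" and "q = p ^ n" and "odd q"
  shows "\<forall>i. [coeff (dicksonE ((q - 3) div 2) + dicksonE ((q - 1) div 2)) i
              = coeff ([:-2, 1:] ^ ((q - 1) div 2)) i] (mod int p)"
proof
  fix i
  have "2 \<le> p"
    using assms(1) by (rule prime_ge_2_nat)
  then have "2 \<le> q"
    using assms(2,3) self_le_power[of p n] by simp
  moreover obtain m where "q = 2 * m + 1"
    using \<open>odd q\<close> by (rule oddE)
  ultimately obtain k where q: "q = 2 * k + 3"
    by (intro that[of "m - 1"]) auto
  define F where "F = dicksonE k + dicksonE (Suc k) - [:-2, 1:] ^ Suc k"
  have "of_nat p dvd ((fls_X - 1) ^ q - (fls_X ^ q - 1) :: int fls)"
    using prime_dvd_add_power_prime_power[OF assms(1), of fls_X "-1" n] assms(3,4) by simp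
  then have "of_nat p dvd fls_X ^ Suc k * ((fls_X - 1) * poly_X_plus_X_inv F)"
    unfolding F_def dicksonE_sum_minus_X_minus_2_power q by (simp only: dvd_minus_iff)
  then have "int p dvd fls_nth (fls_X ^ Suc k * ((fls_X - 1) * poly_X_plus_X_inv F)) j" for j
    by (auto simp: fls_of_nat)
  then have "int p dvd fls_nth ((fls_X - 1) * poly_X_plus_X_inv F) j" for j
    by (rule dvd_fls_nth_cancel_X_power)
  then have "int p dvd fls_nth (poly_X_plus_X_inv F) j" for j
    by (rule dvd_fls_nth_cancel_X_minus_1)
  then have "int p dvd coeff F i"
    by (rule dvd_coeff_if_dvd_poly_X_plus_X_inv)
  then show "[coeff (dicksonE ((q - 3) div 2) + dicksonE ((q - 1) div 2)) i
              = coeff ([:-2, 1:] ^ ((q - 1) div 2)) i] (mod int p)"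
    by (simp add: cong_iff_dvd_diff F_def q)
qed

end
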